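(* Let $K$ be a field of characteristic zero, $L_n=K[x_1^{\pm1},\ldots,x_n^{\pm1}]$ and $W_n=\mathrm{Der}_K(L_n)$. The subgroup of $\mathrm{Aut}_{\mathrm{Lie}}(W_n)$ consisting of automorphisms fixing each $H_i=x_i\partial_i$ ($i=1,\ldots,n$) equals $\mathbb{T}^n$.
   Context: $\mathbb{T}^n=\{t_\lambda\mid\lambda\in K^{*n}\}$ with $t_\lambda\in\mathrm{Aut}_{K\text{-alg}}(L_n)$, $t_\lambda(x_i)=\lambda_ix_i$, regarded as automorphisms of $W_n$ via $\delta\mapsto t_\lambda\delta t_\lambda^{-1}$. *)

theory Defs
  imports "HOL-Library.Poly_Mapping" "HOL-Library.FuncSet"
begin

text \<open>Laurent polynomials L_n = K[x_i^{+-1}] in variables indexed by a finite type 'n: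
  finitely supported maps from exponent vectors ('n =>0 int) to K, with convolution product.\<close>
type_synonym ('n, 'k) laurent = "('n \<Rightarrow>\<^sub>0 int) \<Rightarrow>\<^sub>0 'k"

definition lcst :: "'k::comm_ring_1 \<Rightarrow> ('n, 'k) laurent" where
  "lcst c = Poly_Mapping.single 0 c"

definition lsmult :: "'k::comm_ring_1 \<Rightarrow> ('n, 'k) laurent \<Rightarrow> ('n, 'k) laurent" where
  "lsmult c f = lcst c * f"

definition xvar :: "'n \<Rightarrow> ('n, 'k::comm_ring_1) laurent" where
  "xvar i = Poly_Mapping.single (Poly_Mapping.single i 1) 1"

definition is_der :: "(('n, 'k::comm_ring_1) laurent \<Rightarrow> ('n, 'k) laurent) \<Rightarrow> bool" where
  "is_der D \<longleftrightarrow> (\<forall>f g. D (f + g) = D f + D g) \<and> (\<forall>c f. D (lsmult c f) = lsmult c (D f))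
     \<and> (\<forall>f g. D (f * g) = D f * g + f * D g)"

definition Wn :: "(('n, 'k::comm_ring_1) laurent \<Rightarrow> ('n, 'k) laurent) set" where
  "Wn = {D. is_der D}"

definition pderiv_i :: "'n \<Rightarrow> ('n, 'k::comm_ring_1) laurent \<Rightarrow> ('n, 'k) laurent" where
  "pderiv_i i f = (\<Sum>(e::'n \<Rightarrow>\<^sub>0 int)\<in>Poly_Mapping.keys f. Poly_Mapping.single (e - Poly_Mapping.single i 1)
                                   (of_int (Poly_Mapping.lookup e i) * Poly_Mapping.lookup f e))"

definition Hdiag :: "'n \<Rightarrow> ('n, 'k::comm_ring_1) laurent \<Rightarrow> ('n, 'k) laurent" where
  "Hdiag i f = xvar i * pderiv_i i f"

definition lie_br :: "(('n, 'k::comm_ring_1) laurent \<Rightarrow> ('n, 'k) laurent) \<Rightarrow>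
    (('n, 'k) laurent \<Rightarrow> ('n, 'k) laurent) \<Rightarrow> ('n, 'k) laurent \<Rightarrow> ('n, 'k) laurent" where
  "lie_br D E = (\<lambda>f. D (E f) - E (D f))"

definition dadd :: "(('n, 'k::comm_ring_1) laurent \<Rightarrow> ('n, 'k) laurent) \<Rightarrow>
    (('n, 'k) laurent \<Rightarrow> ('n, 'k) laurent) \<Rightarrow> ('n, 'k) laurent \<Rightarrow> ('n, 'k) laurent" where
  "dadd D E = (\<lambda>f. D f + E f)"

definition dsmult :: "'k::comm_ring_1 \<Rightarrow> (('n, 'k) laurent \<Rightarrow> ('n, 'k) laurent) \<Rightarrow>
    ('n, 'k) laurent \<Rightarrow> ('n, 'k) laurent" where
  "dsmult c D = (\<lambda>f. lsmult c (D f))"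

definition lie_aut :: "((('n, 'k::field) laurent \<Rightarrow> ('n, 'k) laurent) \<Rightarrow>
    (('n, 'k) laurent \<Rightarrow> ('n, 'k) laurent)) set" where
  "lie_aut = {\<phi>. \<phi> \<in> extensional Wn \<and> bij_betw \<phi> Wn Wn
      \<and> (\<forall>D\<in>Wn. \<forall>E\<in>Wn. \<phi> (dadd D E) = dadd (\<phi> D) (\<phi> E))
      \<and> (\<forall>c. \<forall>D\<in>Wn. \<phi> (dsmult c D) = dsmult c (\<phi> D))
      \<and> (\<forall>D\<in>Wn. \<forall>E\<in>Wn. \<phi> (lie_br D E) = lie_br (\<phi> D) (\<phi> E))}"

text \<open>Torus element t_lambda: the K-algebra automorphism with x_i |-> lambda_i x_i,
  i.e. x^e |-> (prod_i lambda_i^(e_i)) x^e.\<close>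
definition tor :: "('n \<Rightarrow> 'k::field) \<Rightarrow> ('n, 'k) laurent \<Rightarrow> ('n, 'k) laurent" where
  "tor l f = (\<Sum>(e::'n \<Rightarrow>\<^sub>0 int)\<in>Poly_Mapping.keys f. Poly_Mapping.single e
               ((\<Prod>i\<in>Poly_Mapping.keys e. l i powi Poly_Mapping.lookup e i) * Poly_Mapping.lookup f e))"

definition torus_W :: "((('n, 'k::field) laurent \<Rightarrow> ('n, 'k) laurent) \<Rightarrow>
    (('n, 'k) laurent \<Rightarrow> ('n, 'k) laurent)) set" where
  "torus_W = {restrict (\<lambda>\<delta>. tor l \<circ> \<delta> \<circ> inv (tor l)) Wn | l. \<forall>i. l i \<noteq> 0}"

end

theory Submission
  imports Defs
begin

text \<open>
  An automorphism \<open>\<phi>\<close> fixing every \<open>H\<^sub>i\<close> commutes with \<open>ad H\<^sub>i\<close> and so preserves the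
  \<open>H\<close>-weight spaces of \<open>W\<^sub>n\<close>. In characteristic zero the weight-\<open>\<alpha>\<close> space consists of the
  derivations \<open>x\<^sup>\<alpha> \<Sum>\<^sub>k a\<^sub>k x\<^sub>k \<partial>\<^sub>k\<close>, so \<open>\<phi>\<close> induces linear bijections \<open>A\<^sub>\<alpha>\<close> of \<open>K\<^sup>n\<close>
  with \<open>A\<^sub>0 = id\<close> that respect the bracket
  \<open>[x\<^sup>\<alpha> a\<cdot>\<partial>, x\<^sup>\<beta> b\<cdot>\<partial>] = x\<^sup>\<alpha>\<^sup>+\<^sup>\<beta> (\<langle>a,\<beta>\<rangle> b - \<langle>b,\<alpha>\<rangle> a)\<cdot>\<partial>\<close>, where \<open>\<langle>a,\<beta>\<rangle> = dot a \<beta>\<close>.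
  Comparing the weights \<open>\<alpha>\<close> and \<open>-\<alpha>\<close> shows that \<open>A\<^sub>\<alpha>\<close> is a nonzero multiple \<open>c(\<alpha>)\<close> of a
  transvection along \<open>\<alpha>\<close>; comparing two independent weights kills the transvection, and the
  bracket then makes \<open>c\<close> a character of \<open>\<int>\<^sup>n\<close>, i.e. \<open>c(\<alpha>) = \<lambda>\<^sup>\<alpha>\<close>. As every derivation is a
  finite sum of weight vectors, \<open>\<phi>\<close> is conjugation by \<open>t\<^sub>\<lambda>\<close>.
\<close>

section \<open>Weights, coefficient vectors and torus characters\<close>

definition dot :: "('n::finite \<Rightarrow> 'k::comm_ring_1) \<Rightarrow> ('n \<Rightarrow>\<^sub>0 int) \<Rightarrow> 'k" where
  "dot a g = (\<Sum>j\<in>UNIV. a j * of_int (Poly_Mapping.lookup g j))"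

definition unit_vec :: "'n \<Rightarrow> 'n \<Rightarrow> 'k::zero_neq_one" where
  "unit_vec i = (\<lambda>j. if j = i then 1 else 0)"

lemma dot_add_left: "dot (\<lambda>k. a k + b k) g = dot a g + dot b g"
  by (simp add: dot_def distrib_right sum.distrib)

lemma dot_diff_left: "dot (\<lambda>k. a k - b k) g = dot a g - dot b g"
  by (simp add: dot_def left_diff_distrib sum_subtractf)

lemma dot_scale_left: "dot (\<lambda>k. t * a k) g = t * dot a g"
  by (simp add: dot_def sum_distrib_left mult.assoc)

lemma dot_left_linear:
  "dot (\<lambda>k. a k + b k) = (\<lambda>g. dot a g + dot b g)"
  "dot (\<lambda>k. a k - b k) = (\<lambda>g. dot a g - dot b g)"
  "dot (\<lambda>k. t * a k) = (\<lambda>g. t * dot a g)"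
  by (simp_all add: fun_eq_iff dot_add_left dot_diff_left dot_scale_left)

lemma dot_add_right: "dot a (g + h) = dot a g + dot a h"
  by (simp add: dot_def lookup_add distrib_left sum.distrib)

lemma dot_uminus_right: "dot a (- g) = - dot a g"
  by (simp add: dot_def sum_negf)

lemma dot_zero_right [simp]: "dot a 0 = 0"
  by (simp add: dot_def)

lemma dot_single_right: "dot a (Poly_Mapping.single k m) = a k * of_int m"
proof -
  have "dot a (Poly_Mapping.single k m) = (\<Sum>j\<in>UNIV. if j = k then a k * of_int m else 0)"
    unfolding dot_def by (rule sum.cong) (auto simp: lookup_single)
  then show ?thesis by simp
qed

lemma dot_unit_vec: "dot (unit_vec k) g = of_int (Poly_Mapping.lookup g k)"
proof -
  have "dot (unit_vec k) g = (\<Sum>j\<in>UNIV. if j = k then of_int (Poly_Mapping.lookup g k) else 0)"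
    unfolding dot_def by (rule sum.cong) (auto simp: unit_vec_def)
  then show ?thesis by simp
qed

lemma exists_dot_eq_1:
  assumes "g \<noteq> 0"
  shows "\<exists>e::'n::finite \<Rightarrow> 'k::field_char_0. dot e g = 1"
proof -
  obtain i where "Poly_Mapping.lookup g i \<noteq> 0"
    using assms by (metis poly_mapping_eqI lookup_zero)
  then have "dot (\<lambda>k. inverse (of_int (Poly_Mapping.lookup g i)) * unit_vec i k) g = (1::'k)"
    by (simp add: dot_scale_left dot_unit_vec)
  then show ?thesis by blast
qed

definition torus_char :: "('n \<Rightarrow> 'k::field) \<Rightarrow> ('n \<Rightarrow>\<^sub>0 int) \<Rightarrow> 'k" where
  "torus_char l g = (\<Prod>i\<in>Poly_Mapping.keys g. l i powi Poly_Mapping.lookup g i)"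

lemma torus_char_UNIV:
  "torus_char l (g::'n::finite \<Rightarrow>\<^sub>0 int) = (\<Prod>i\<in>UNIV. l i powi Poly_Mapping.lookup g i)"
  unfolding torus_char_def by (rule prod.mono_neutral_left) (auto simp: in_keys_iff)

lemma torus_char_add:
  assumes "\<And>i. l i \<noteq> 0"
  shows "torus_char l (g + h :: 'n::finite \<Rightarrow>\<^sub>0 int) = torus_char l g * torus_char l h"
  by (simp add: torus_char_UNIV lookup_add power_int_add assms prod.distrib)

lemma torus_char_single: "torus_char l (Poly_Mapping.single i 1) = l i"
  by (simp add: torus_char_def)

lemma torus_char_inverse:
  assumes "\<And>i. l i \<noteq> 0"
  shows "torus_char (\<lambda>i. inverse (l i)) (g :: 'n::finite \<Rightarrow>\<^sub>0 int) * torus_char l g = 1"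
  by (simp add: torus_char_UNIV prod.distrib[symmetric] power_int_inverse assms)

section \<open>Linear algebra of the induced weight maps\<close>

text \<open>The data an automorphism fixing all \<open>H\<^sub>i\<close> induces on weight spaces: \<open>A g a\<close> is the
  coefficient vector of the image of \<open>x\<^sup>g \<Sum>\<^sub>k a\<^sub>k x\<^sub>k \<partial>\<^sub>k\<close>, and \<open>bracket\<close> is the commutator of two
  such derivations.\<close>
locale bracket_family =
  fixes A :: "('n::finite \<Rightarrow>\<^sub>0 int) \<Rightarrow> ('n \<Rightarrow> 'k::field_char_0) \<Rightarrow> ('n \<Rightarrow> 'k)"
  assumes add: "A g (\<lambda>k. a k + b k) = (\<lambda>k. A g a k + A g b k)"
    and scale: "A g (\<lambda>k. t * a k) = (\<lambda>k. t * A g a k)"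
    and surj: "\<exists>a. A g a = b"
    and zero_weight: "A 0 a = a"
    and bracket: "A (g + h) (\<lambda>k. dot a h * b k - dot b g * a k)
      = (\<lambda>k. dot (A g a) h * A h b k - dot (A h b) g * A g a k)"
begin

lemma opposite_weights:
  "dot a g * b k + dot b g * a k = dot (A g a) g * A (-g) b k + dot (A (-g) b) g * A g a k"
proof -
  have "A (g + - g) (\<lambda>k. dot a (-g) * b k - dot b g * a k) k
      = dot (A g a) (-g) * A (-g) b k - dot (A (-g) b) g * A g a k"
    by (simp only: bracket)
  then show ?thesis by (simp add: zero_weight dot_uminus_right algebra_simps)
qed

lemma dot_image_eq_0: assumes "dot a g = 0" shows "dot (A g a) g = 0"
proof (rule ccontr)
  assume ne: "dot (A g a) g \<noteq> 0"
  obtain b where b: "A (-g) b = A g a" using surj by blast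
  have "dot b g * a k = 2 * dot (A g a) g * A g a k" for k
    using opposite_weights[of a g b k] b assms by simp
  then have "A g a = (\<lambda>k. (dot b g / (2 * dot (A g a) g)) * a k)"
    using ne by (auto simp: field_simps)
  then have "dot (A g a) g = (dot b g / (2 * dot (A g a) g)) * dot a g"
    by (metis dot_scale_left)
  then show False using ne assms by simp
qed

text \<open>Comparing the weights \<open>g\<close> and \<open>-g\<close> already forces \<open>A g\<close> to be a multiple of a
  transvection fixing the hyperplane \<open>dot a g = 0\<close>.\<close>
lemma transvection_form: "\<exists>c u. c \<noteq> 0 \<and> dot u g = 0 \<and> (\<forall>a. A g a = (\<lambda>k. c * (a k + dot a g * u k)))"
proof (cases "g = 0")
  case True
  then show ?thesis by (intro exI[of _ 1] exI[of _ "\<lambda>k. 0"]) (simp add: zero_weight True)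
next
  case False
  then obtain e :: "'n \<Rightarrow> 'k" where e: "dot e g = 1" using exists_dot_eq_1 by blast
  define c where "c = dot (A g e) g"
  define s where "s = dot (A (-g) e) g"
  have "(\<lambda>k. e k + e k) = (\<lambda>k. c * A (-g) e k + s * A g e k)"
    using opposite_weights[of e g e] by (simp add: e c_def s_def)
  then have "dot (\<lambda>k. e k + e k) g = dot (\<lambda>k. c * A (-g) e k + s * A g e k) g"
    by (rule arg_cong)
  then have cs: "c * s = 1"
    by (simp add: dot_add_left dot_scale_left e c_def[symmetric] s_def[symmetric])
  have perp: "A g a k = c * a k" if "dot a g = 0" for a k
  proof -
    have "a k = s * A g a k"
      using opposite_weights[of a g e k] dot_image_eq_0[OF that] that by (simp add: e s_def)
    then show ?thesis using cs by (simp add: mult.assoc[symmetric])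
  qed
  define u where "u = (\<lambda>k. inverse c * A g e k - e k)"
  have c0: "c \<noteq> 0" using cs by auto
  have du: "dot u g = 0"
    using c0 by (simp add: u_def dot_diff_left dot_scale_left e c_def[symmetric])
  have "A g a k = c * (a k + dot a g * u k)" for a k
  proof -
    have perp_part: "dot (\<lambda>k. a k - dot a g * e k) g = 0"
      by (simp add: dot_diff_left dot_scale_left e)
    have "A g a k = A g (\<lambda>k. (a k - dot a g * e k) + dot a g * e k) k" by simp
    also have "\<dots> = A g (\<lambda>k. a k - dot a g * e k) k + dot a g * A g e k"
      by (simp only: add scale)
    also have "\<dots> = c * (a k - dot a g * e k) + dot a g * A g e k"
      by (simp only: perp[OF perp_part])
    also have "\<dots> = c * (a k + dot a g * u k)"
      using c0 by (simp add: u_def field_simps)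
    finally show ?thesis .
  qed
  then show ?thesis using c0 du by (intro exI[of _ c] exI[of _ u]) auto
qed

context
  fixes C :: "('n \<Rightarrow>\<^sub>0 int) \<Rightarrow> 'k" and U :: "('n \<Rightarrow>\<^sub>0 int) \<Rightarrow> 'n \<Rightarrow> 'k"
  assumes transvection: "\<And>g a. A g a = (\<lambda>k. C g * (a k + dot a g * U g k))"
    and C_nonzero: "\<And>g. C g \<noteq> 0"
    and dot_U: "\<And>g. dot (U g) g = 0"
begin

lemma bracket_transvection:
  "C (g + h) * (dot a h * b k - dot b g * a k + (dot a h * dot b (g + h) - dot b g * dot a (g + h)) * U (g + h) k)
   = C g * (dot a h + dot a g * dot (U g) h) * (C h * (b k + dot b h * U h k))
     - C h * (dot b g + dot b h * dot (U h) g) * (C g * (a k + dot a g * U g k))"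
proof -
  have "A (g + h) (\<lambda>k. dot a h * b k - dot b g * a k) k
      = dot (A g a) h * A h b k - dot (A h b) g * A g a k"
    by (simp only: bracket)
  then show ?thesis by (simp only: transvection dot_scale_left dot_add_left dot_diff_left)
qed

context
  fixes \<alpha> \<beta> :: "'n \<Rightarrow>\<^sub>0 int" and p q :: "'n \<Rightarrow> 'k"
  assumes p: "dot p \<alpha> = 0" "dot p \<beta> = 1" and q: "dot q \<beta> = 0" "dot q \<alpha> = 1"
begin

lemma scalar_add_dual: "C (\<alpha> + \<beta>) = C \<alpha> * C \<beta>"
proof -
  have scaled: "C (\<alpha> + \<beta>) * (q k - p k) = C \<alpha> * C \<beta> * (q k - p k)" for k
    using bracket_transvection[of \<alpha> \<beta> p q k] by (simp add: p q dot_add_right algebra_simps)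
  have "q \<noteq> p" using p(1) q(2) by auto
  then obtain k where "q k \<noteq> p k" by auto
  then show ?thesis using scaled[of k] by simp
qed

lemma transvection_add_left: "U (\<alpha> + \<beta>) k = U \<beta> k - dot (U \<beta>) \<alpha> * p k"
proof -
  have "C \<alpha> * C \<beta> * U (\<alpha> + \<beta>) k = C \<alpha> * C \<beta> * (U \<beta> k - dot (U \<beta>) \<alpha> * p k)"
    using bracket_transvection[of \<alpha> \<beta> p p k]
    by (simp add: p q dot_add_right scalar_add_dual algebra_simps)
  then show ?thesis using C_nonzero by simp
qed

lemma transvection_add_right: "U (\<alpha> + \<beta>) k = U \<alpha> k - dot (U \<alpha>) \<beta> * q k"
proof -
  have "C \<alpha> * C \<beta> * U (\<alpha> + \<beta>) k = C \<alpha> * C \<beta> * (U \<alpha> k - dot (U \<alpha>) \<beta> * q k)"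
    using bracket_transvection[of \<alpha> \<beta> q q k]
    by (simp add: p q dot_add_right scalar_add_dual algebra_simps)
  then show ?thesis using C_nonzero by simp
qed

lemma transvection_cross:
  "dot (U \<alpha>) \<beta> * (p k + U \<beta> k) = dot (U \<beta>) \<alpha> * (q k + U \<alpha> k)"
proof -
  have "C \<alpha> * C \<beta> * (dot (U \<alpha>) \<beta> * (p k + U \<beta> k))
      = C \<alpha> * C \<beta> * (dot (U \<beta>) \<alpha> * (q k + U \<alpha> k))"
    using bracket_transvection[of \<alpha> \<beta> q p k]
    by (simp add: p q dot_add_right scalar_add_dual algebra_simps)
  then show ?thesis using C_nonzero by simp
qed

lemma transvection_dual_eq_0: "dot (U \<alpha>) \<beta> = 0"
proof -
  define X Y where "X = dot (U \<alpha>) \<beta>" and "Y = dot (U \<beta>) \<alpha>"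
  have "(\<lambda>k. U \<beta> k - Y * p k) = (\<lambda>k. U \<alpha> k - X * q k)"
    using transvection_add_left transvection_add_right by (auto simp: X_def Y_def)
  then have "dot (\<lambda>k. U \<beta> k - Y * p k) \<alpha> = dot (\<lambda>k. U \<alpha> k - X * q k) \<alpha>"
    by (rule arg_cong)
  then have YX: "Y = - X"
    by (simp add: dot_diff_left dot_scale_left p q dot_U Y_def[symmetric])
  have cross: "(\<lambda>k. X * p k + X * U \<beta> k) = (\<lambda>k. Y * q k + Y * U \<alpha> k)"
    using transvection_cross by (auto simp: X_def Y_def distrib_left)
  then have "dot (\<lambda>k. X * p k + X * U \<beta> k) \<alpha> = dot (\<lambda>k. Y * q k + Y * U \<alpha> k) \<alpha>"
    by (rule arg_cong)
  then have "X * Y = Y"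
    by (simp add: dot_add_left dot_scale_left p q dot_U Y_def[symmetric])
  moreover have "dot (\<lambda>k. X * p k + X * U \<beta> k) \<beta> = dot (\<lambda>k. Y * q k + Y * U \<alpha> k) \<beta>"
    using cross by (rule arg_cong)
  then have "X = Y * X"
    by (simp add: dot_add_left dot_scale_left p q dot_U X_def[symmetric])
  ultimately have "X = Y" by (metis mult.commute)
  with YX show ?thesis by (simp add: X_def)
qed

end

lemma transvection_eq_0:
  assumes "g \<noteq> 0"
  shows "U g k = 0"
proof (cases "\<exists>i. i \<noteq> k \<and> Poly_Mapping.lookup g i \<noteq> 0")
  case True
  then obtain i where i: "i \<noteq> k" "Poly_Mapping.lookup g i \<noteq> 0" by blast
  define gi gk :: 'k where "gi = of_int (Poly_Mapping.lookup g i)"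
    and "gk = of_int (Poly_Mapping.lookup g k)"
  have gi: "gi \<noteq> 0" using i by (simp add: gi_def)
  define p q where "p = (\<lambda>j. unit_vec k j - (gk / gi) * unit_vec i j)"
    and "q = (\<lambda>j. inverse gi * unit_vec i j)"
  have p: "dot p g = 0" "dot p (Poly_Mapping.single k 1) = 1"
    unfolding p_def dot_diff_left dot_scale_left dot_unit_vec
    using gi i by (simp_all add: gi_def gk_def lookup_single)
  have q: "dot q (Poly_Mapping.single k 1) = 0" "dot q g = 1"
    unfolding q_def dot_scale_left dot_unit_vec
    using gi i by (simp_all add: gi_def lookup_single)
  have "dot (U g) (Poly_Mapping.single k 1) = 0"
    using transvection_dual_eq_0[OF p q] .
  then show ?thesis by (simp add: dot_single_right)
next
  case False
  then have g: "g = Poly_Mapping.single k (Poly_Mapping.lookup g k)"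
    by (intro poly_mapping_eqI) (auto simp: lookup_single when_def)
  have "U g k * of_int (Poly_Mapping.lookup g k) = 0"
    using dot_U[of g] by (subst (asm) (2) g) (simp only: dot_single_right)
  moreover have "Poly_Mapping.lookup g k \<noteq> 0" using assms g by auto
  ultimately show ?thesis by simp
qed

lemma scalar_form: "A g a = (\<lambda>k. C g * a k)"
  by (cases "g = 0") (simp_all add: transvection transvection_eq_0)

end

lemma exists_scalar_form: "\<exists>C. (\<forall>g. C g \<noteq> 0) \<and> (\<forall>g a. A g a = (\<lambda>k. C g * a k))"
proof -
  obtain C U where CU: "\<And>g. C g \<noteq> 0 \<and> dot (U g) g = 0
      \<and> (\<forall>a. A g a = (\<lambda>k. C g * (a k + dot a g * U g k)))"
    using transvection_form by metis
  then have "A g a = (\<lambda>k. C g * a k)" for g a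
    by (intro scalar_form) auto
  then show ?thesis using CU by blast
qed

context
  fixes C :: "('n \<Rightarrow>\<^sub>0 int) \<Rightarrow> 'k"
  assumes C_nonzero: "\<And>g. C g \<noteq> 0"
    and scalar: "\<And>g a. A g a = (\<lambda>k. C g * a k)"
begin

lemma scalar_zero: "C 0 = 1"
  using zero_weight[of "\<lambda>k. 1"] by (simp add: scalar fun_eq_iff)

lemma scalar_add_distinct:
  assumes "\<alpha> \<noteq> \<beta>"
  shows "C (\<alpha> + \<beta>) = C \<alpha> * C \<beta>"
proof -
  obtain i where i: "Poly_Mapping.lookup \<alpha> i \<noteq> Poly_Mapping.lookup \<beta> i"
    using assms poly_mapping_eqI by metis
  have "A (\<alpha> + \<beta>) (\<lambda>k. dot (unit_vec i) \<beta> * unit_vec i k - dot (unit_vec i) \<alpha> * unit_vec i k) i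
      = dot (A \<alpha> (unit_vec i)) \<beta> * A \<beta> (unit_vec i) i - dot (A \<beta> (unit_vec i)) \<alpha> * A \<alpha> (unit_vec i) i"
    by (simp only: bracket)
  then have "C (\<alpha> + \<beta>) * (of_int (Poly_Mapping.lookup \<beta> i) - of_int (Poly_Mapping.lookup \<alpha> i))
      = C \<alpha> * C \<beta> * (of_int (Poly_Mapping.lookup \<beta> i) - of_int (Poly_Mapping.lookup \<alpha> i))"
    by (simp only: scalar dot_scale_left dot_unit_vec) (simp add: unit_vec_def algebra_simps)
  then show ?thesis using i by simp
qed

lemma scalar_add: "C (\<alpha> + \<beta>) = C \<alpha> * C \<beta>"
proof (cases "\<alpha> = \<beta>")
  case False
  then show ?thesis by (rule scalar_add_distinct)
next
  case True
  show ?thesis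
  proof (cases "\<alpha> = 0")
    case True
    then show ?thesis using \<open>\<alpha> = \<beta>\<close> by (simp add: scalar_zero)
  next
    case False
    text \<open>Write \<open>\<alpha> = (\<alpha> + \<alpha>) + (-\<alpha>)\<close> and \<open>0 = \<alpha> + (-\<alpha>)\<close>, both sums of distinct weights.\<close>
    have "\<alpha> + \<alpha> \<noteq> - \<alpha>" "\<alpha> \<noteq> - \<alpha>"
      using False by (auto simp: poly_mapping_eq_iff fun_eq_iff lookup_add)
    then have "C (\<alpha> + \<alpha>) * C (- \<alpha>) = C \<alpha>" "C \<alpha> * C (- \<alpha>) = 1"
      by (simp_all add: scalar_add_distinct[symmetric] scalar_zero)
    then show ?thesis using \<open>\<alpha> = \<beta>\<close> C_nonzero[of "- \<alpha>"]
      by (metis mult.assoc mult_right_cancel mult_1_left)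
  qed
qed

lemma scalar_eq_torus_char: "C g = torus_char (\<lambda>i. C (Poly_Mapping.single i 1)) g"
proof -
  define l where "l = (\<lambda>i. C (Poly_Mapping.single i 1))"
  have l: "l i \<noteq> 0" for i by (simp add: l_def C_nonzero)
  have "C g = torus_char l g"
    using subset_UNIV
  proof (induction g rule: frag_induction)
    case zero
    then show ?case by (simp add: scalar_zero torus_char_def)
  next
    case (one i)
    then show ?case by (simp add: torus_char_single l_def)
  next
    case (diff a b)
    have "C (a - b) * C b = C a" using scalar_add[of "a - b" b] by simp
    also have "\<dots> = torus_char l (a - b) * C b"
      using diff torus_char_add[of l "a - b" b] l by simp
    finally show ?case using C_nonzero[of b] by simp
  qed
  then show ?thesis by (simp add: l_def)
qed

end

lemma exists_torus_form:
  "\<exists>l. (\<forall>i. l i \<noteq> 0) \<and> (\<forall>g a. A g a = (\<lambda>k. torus_char l g * a k))"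
proof -
  obtain C where C: "\<And>g. C g \<noteq> 0" "\<And>g a. A g a = (\<lambda>k. C g * a k)"
    using exists_scalar_form by blast
  then show ?thesis
    by (intro exI[of _ "\<lambda>i. C (Poly_Mapping.single i 1)"]) (simp add: scalar_eq_torus_char[OF C, symmetric])
qed

end

section \<open>Laurent polynomials and diagonal operators\<close>

definition xpow :: "('n \<Rightarrow>\<^sub>0 int) \<Rightarrow> ('n, 'k::comm_ring_1) laurent" where
  "xpow a = Poly_Mapping.single a 1"

definition diag :: "(('n \<Rightarrow>\<^sub>0 int) \<Rightarrow> 'k::comm_ring_1) \<Rightarrow> ('n, 'k) laurent \<Rightarrow> ('n, 'k) laurent" where
  "diag w f = Poly_Mapping.mapp (\<lambda>e c. w e * c) f"

lemma lookup_diag [simp]: "Poly_Mapping.lookup (diag w f) e = w e * Poly_Mapping.lookup f e"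
  by (auto simp: diag_def lookup_mapp in_keys_iff when_def)

lemma lookup_lcst_mult [simp]: "Poly_Mapping.lookup (lcst c * f) e = c * Poly_Mapping.lookup f e"
proof -
  have "lcst c * f = Poly_Mapping.map ((*) c) f"
    by (simp add: lcst_def mult_map_scale_conv_mult)
  then show ?thesis by (simp add: map.rep_eq when_def)
qed

lemma lcst_add: "lcst (c + d) = lcst c + lcst d"
  by (simp add: lcst_def single_add)

lemma xpow_add: "xpow a * xpow b = xpow (a + b)"
  by (simp add: xpow_def mult_single)

lemma xpow_0 [simp]: "xpow 0 = 1"
  by (simp add: xpow_def)

lemma xvar_eq_xpow: "xvar i = xpow (Poly_Mapping.single i 1)"
  by (simp add: xvar_def xpow_def)

lemma single_eq_lcst_xpow: "Poly_Mapping.single a c = lcst c * xpow a"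
  by (simp add: lcst_def xpow_def mult_single)

lemma diag_add: "diag w (f + g) = diag w f + diag w g"
  by (rule poly_mapping_eqI) (simp add: lookup_add distrib_left)

lemma diag_diff: "diag w (f - g) = diag w f - diag w g"
  by (rule poly_mapping_eqI) (simp add: lookup_minus right_diff_distrib)

lemma diag_0 [simp]: "diag w 0 = 0"
  by (rule poly_mapping_eqI) simp

lemma diag_single: "diag w (Poly_Mapping.single a c) = Poly_Mapping.single a (w a * c)"
  by (rule poly_mapping_eqI) (simp add: lookup_single when_def)

lemma diag_xpow: "diag w (xpow a) = lcst (w a) * xpow a"
  by (simp add: xpow_def diag_single lcst_def mult_single)

lemma diag_diag: "diag w (diag v f) = diag (\<lambda>e. w e * v e) f"
  by (rule poly_mapping_eqI) (simp add: mult.assoc)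

lemma diag_commute: "diag w (diag v f) = diag v (diag w f)"
  by (simp add: diag_diag mult.commute)

lemma diag_lcst_mult: "diag w (lcst c * f) = lcst c * diag w f"
  by (rule poly_mapping_eqI) (simp only: lookup_diag lookup_lcst_mult mult.left_commute)

lemma diag_cong: "(\<And>e. w e = v e) \<Longrightarrow> diag w f = diag v f"
  by (rule poly_mapping_eqI) simp

lemma diag_weight_add: "diag (\<lambda>e. w e + v e) f = diag w f + diag v f"
  by (rule poly_mapping_eqI) (simp add: lookup_add distrib_right)

lemma diag_weight_diff: "diag (\<lambda>e. w e - v e) f = diag w f - diag v f"
  by (rule poly_mapping_eqI) (simp add: lookup_minus left_diff_distrib)

lemma diag_weight_scale: "diag (\<lambda>e. c * w e) f = lcst c * diag w f"
  by (rule poly_mapping_eqI) (simp add: mult.assoc)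

lemma poly_mapping_single_induct [case_names zero add]:
  assumes "P 0" and "\<And>f a b. P f \<Longrightarrow> P (f + Poly_Mapping.single a b)"
  shows "P f"
proof (induction f rule: update_induct)
  case const
  then show ?case using assms(1) .
next
  case (update f a b)
  then have "Poly_Mapping.update a b f = f + Poly_Mapping.single a b"
    by (intro poly_mapping_eqI) (auto simp: lookup_update lookup_add lookup_single when_def in_keys_iff)
  then show ?case using assms(2)[OF update(3)] by simp
qed

lemma diag_mult:
  assumes w: "\<And>a b. w (a + b) = w a * w b"
  shows "diag w (f * g) = diag w f * diag w g"
proof (induction f rule: poly_mapping_single_induct)
  case (add f a b)
  have "diag w (Poly_Mapping.single a b * g) = diag w (Poly_Mapping.single a b) * diag w g"
    by (induction g rule: poly_mapping_single_induct)
      (simp_all add: distrib_left diag_add mult_single diag_single w ac_simps)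
  then show ?case using add by (simp add: distrib_right diag_add)
qed simp

lemma diag_leibniz:
  assumes w: "\<And>a b. w (a + b) = w a + w b"
  shows "diag w (f * g) = diag w f * g + f * diag w g"
proof (induction f rule: poly_mapping_single_induct)
  case (add f a b)
  have "diag w (Poly_Mapping.single a b * g)
      = diag w (Poly_Mapping.single a b) * g + Poly_Mapping.single a b * diag w g"
  proof (induction g rule: poly_mapping_single_induct)
    case (add g a' b')
    have "diag w (Poly_Mapping.single a b * Poly_Mapping.single a' b')
        = diag w (Poly_Mapping.single a b) * Poly_Mapping.single a' b'
          + Poly_Mapping.single a b * diag w (Poly_Mapping.single a' b')"
      by (simp add: mult_single diag_single w single_add[symmetric] algebra_simps)
    then show ?case using add by (simp add: distrib_left diag_add algebra_simps)
  qed simp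
  then show ?case using add by (simp add: distrib_right diag_add algebra_simps)
qed simp

lemma sum_keys_single_eq_diag:
  "(\<Sum>e\<in>Poly_Mapping.keys f. Poly_Mapping.single e (w e * Poly_Mapping.lookup f e)) = diag w f"
proof (rule poly_mapping_eqI)
  fix k
  have "Poly_Mapping.lookup (\<Sum>e\<in>Poly_Mapping.keys f. Poly_Mapping.single e (w e * Poly_Mapping.lookup f e)) k
      = (\<Sum>e\<in>Poly_Mapping.keys f. if e = k then w k * Poly_Mapping.lookup f k else 0)"
    by (simp add: lookup_sum lookup_single when_def)
  also have "\<dots> = w k * Poly_Mapping.lookup f k"
    by (simp add: in_keys_iff)
  finally show "Poly_Mapping.lookup (\<Sum>e\<in>Poly_Mapping.keys f. Poly_Mapping.single e (w e * Poly_Mapping.lookup f e)) k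
      = Poly_Mapping.lookup (diag w f) k" by simp
qed

lemma laurent_expansion:
  "(f::('n, 'k::comm_ring_1) laurent) = (\<Sum>e\<in>Poly_Mapping.keys f. Poly_Mapping.single e (Poly_Mapping.lookup f e))"
proof -
  have "diag (\<lambda>e. 1) f = f" by (rule poly_mapping_eqI) simp
  then show ?thesis using sum_keys_single_eq_diag[where w = "\<lambda>e. 1" and f = f] by simp
qed

lemma Hdiag_eq_diag:
  "Hdiag i = (diag (dot (unit_vec i)) :: ('n::finite, 'k::comm_ring_1) laurent \<Rightarrow> _)"
proof
  fix f :: "('n::finite, 'k::comm_ring_1) laurent"
  have "Hdiag i f = (\<Sum>e\<in>Poly_Mapping.keys f. xvar i * Poly_Mapping.single (e - Poly_Mapping.single i 1)
                                   (of_int (Poly_Mapping.lookup e i) * Poly_Mapping.lookup f e))"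
    by (simp add: Hdiag_def pderiv_i_def sum_distrib_left)
  also have "\<dots> = (\<Sum>e\<in>Poly_Mapping.keys f. Poly_Mapping.single e (dot (unit_vec i) e * Poly_Mapping.lookup f e))"
    by (rule sum.cong) (simp_all add: xvar_def mult_single dot_unit_vec)
  finally show "Hdiag i f = diag (dot (unit_vec i)) f" by (simp add: sum_keys_single_eq_diag)
qed

lemma tor_eq_diag: "tor l = diag (torus_char l)"
  unfolding tor_def torus_char_def by (rule ext) (rule sum_keys_single_eq_diag)

section \<open>Derivations\<close>

lemma is_derI:
  assumes "\<And>f g. D (f + g) = D f + D g" and "\<And>c f. D (lcst c * f) = lcst c * D f"
    and "\<And>f g. D (f * g) = D f * g + f * D g"
  shows "is_der D"
  using assms by (simp add: is_der_def lsmult_def)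

lemma der_add: "is_der D \<Longrightarrow> D (f + g) = D f + D g"
  unfolding is_der_def by blast

lemma der_lcst_mult: "is_der D \<Longrightarrow> D (lcst c * f) = lcst c * D f"
  unfolding is_der_def lsmult_def by blast

lemma der_leibniz: "is_der D \<Longrightarrow> D (f * g) = D f * g + f * D g"
  unfolding is_der_def by blast

lemma der_0: "is_der D \<Longrightarrow> D 0 = 0"
  using der_add[of D 0 0] by simp

lemma der_1: "is_der D \<Longrightarrow> D 1 = 0"
  using der_leibniz[of D 1 1] by simp

lemma is_der_zero: "is_der (\<lambda>f. 0)"
  by (rule is_derI) simp_all

lemma is_der_diag:
  assumes "\<And>a b. w (a + b) = w a + w b"
  shows "is_der (diag w)"
  by (rule is_derI) (simp_all only: diag_add diag_lcst_mult diag_leibniz assms)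

lemma is_der_Hdiag: "is_der (Hdiag i :: ('n::finite, 'k::comm_ring_1) laurent \<Rightarrow> _)"
  unfolding Hdiag_eq_diag by (rule is_der_diag) (rule dot_add_right)

lemma is_der_mult_left:
  assumes "is_der D"
  shows "is_der (\<lambda>f. g * D f)"
proof (rule is_derI)
  show "g * D (f + h) = g * D f + g * D h" for f h
    by (simp add: der_add[OF assms] algebra_simps)
  show "g * D (lcst c * f) = lcst c * (g * D f)" for c f
    by (simp only: der_lcst_mult[OF assms] mult.left_commute)
  show "g * D (f * h) = g * D f * h + f * (g * D h)" for f h
    by (simp add: der_leibniz[OF assms] algebra_simps)
qed

lemma is_der_dadd:
  assumes "is_der D" and "is_der E"
  shows "is_der (dadd D E)"
proof (rule is_derI)
  show "dadd D E (f + h) = dadd D E f + dadd D E h" for f h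
    by (simp add: dadd_def der_add[OF assms(1)] der_add[OF assms(2)] algebra_simps)
  show "dadd D E (lcst c * f) = lcst c * dadd D E f" for c f
    by (simp only: dadd_def der_lcst_mult[OF assms(1)] der_lcst_mult[OF assms(2)] distrib_left)
  show "dadd D E (f * h) = dadd D E f * h + f * dadd D E h" for f h
    by (simp add: dadd_def der_leibniz[OF assms(1)] der_leibniz[OF assms(2)] algebra_simps)
qed

lemma is_der_dsmult: "is_der D \<Longrightarrow> is_der (dsmult c D)"
  unfolding dsmult_def lsmult_def by (rule is_der_mult_left)

lemma is_der_lie_br:
  assumes "is_der D" and "is_der E"
  shows "is_der (lie_br D E)"
proof (rule is_derI)
  show "lie_br D E (f + h) = lie_br D E f + lie_br D E h" for f h
    by (simp add: lie_br_def der_add[OF assms(1)] der_add[OF assms(2)] algebra_simps)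
  show "lie_br D E (lcst c * f) = lcst c * lie_br D E f" for c f
    by (simp only: lie_br_def der_lcst_mult[OF assms(1)] der_lcst_mult[OF assms(2)] right_diff_distrib)
  show "lie_br D E (f * h) = lie_br D E f * h + f * lie_br D E h" for f h
    by (simp add: lie_br_def der_leibniz[OF assms(1)] der_leibniz[OF assms(2)]
        der_add[OF assms(1)] der_add[OF assms(2)] algebra_simps)
qed

definition dsum :: "'i set \<Rightarrow> ('i \<Rightarrow> ('n, 'k::comm_ring_1) laurent \<Rightarrow> ('n, 'k) laurent)
    \<Rightarrow> ('n, 'k) laurent \<Rightarrow> ('n, 'k) laurent" where
  "dsum I F = (\<lambda>f. \<Sum>i\<in>I. F i f)"

lemma dsum_empty: "dsum {} F = (\<lambda>f. 0)"
  by (simp add: dsum_def)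

lemma dsum_insert: "finite I \<Longrightarrow> i \<notin> I \<Longrightarrow> dsum (insert i I) F = dadd (F i) (dsum I F)"
  by (simp add: dsum_def dadd_def)

lemma is_der_dsum:
  assumes "finite I" and "\<And>i. i \<in> I \<Longrightarrow> is_der (F i)"
  shows "is_der (dsum I F)"
  using assms
  by (induction I rule: finite_induct) (simp_all add: dsum_empty is_der_zero dsum_insert is_der_dadd)

lemma der_xpow_eq_0:
  assumes D: "is_der D" and vars: "\<And>k. D (xvar k) = 0"
  shows "D (xpow (a :: 'n::finite \<Rightarrow>\<^sub>0 int)) = (0 :: ('n, 'k::comm_ring_1) laurent)"
  using subset_UNIV
proof (induction a rule: frag_induction)
  case zero
  then show ?case using der_1[OF D] by simp
next
  case (one k)
  then show ?case using vars[of k] by (simp add: xvar_eq_xpow)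
next
  case (diff a b)
  have "D (xpow a) = D (xpow (a - b)) * xpow b + xpow (a - b) * D (xpow b)"
    using der_leibniz[OF D, of "xpow (a - b)" "xpow b"] by (simp add: xpow_add)
  then have "D (xpow (a - b)) * (xpow b * xpow (- b)) = 0"
    using diff by (simp add: mult.assoc[symmetric])
  then show ?case by (simp add: xpow_add)
qed

lemma der_eqI:
  assumes D: "is_der D" and E: "is_der E" and vars: "\<And>k. D (xvar k) = E (xvar k)"
  shows "D = (E :: ('n::finite, 'k::comm_ring_1) laurent \<Rightarrow> _)"
proof -
  define F where "F = (\<lambda>f. D f - E f)"
  have F: "is_der F"
  proof (rule is_derI)
    show "F (f + g) = F f + F g" for f g by (simp add: F_def der_add[OF D] der_add[OF E])
    show "F (lcst c * f) = lcst c * F f" for c f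
      by (simp add: F_def der_lcst_mult[OF D] der_lcst_mult[OF E] right_diff_distrib)
    show "F (f * g) = F f * g + f * F g" for f g
      by (simp add: F_def der_leibniz[OF D] der_leibniz[OF E] algebra_simps)
  qed
  have "F (xpow a) = 0" for a
    by (rule der_xpow_eq_0[OF F]) (simp add: F_def vars)
  then have "F f = 0" for f
    by (induction f rule: poly_mapping_single_induct)
      (simp_all add: der_0[OF F] der_add[OF F] single_eq_lcst_xpow der_lcst_mult[OF F])
  then show ?thesis by (auto simp: F_def fun_eq_iff)
qed

section \<open>Weight derivations\<close>

text \<open>\<open>wder \<alpha> a\<close> is the derivation \<open>x\<^sup>\<alpha> \<Sum>\<^sub>k a\<^sub>k x\<^sub>k \<partial>\<^sub>k\<close>.\<close>
definition wder :: "('n::finite \<Rightarrow>\<^sub>0 int) \<Rightarrow> ('n \<Rightarrow> 'k::comm_ring_1) \<Rightarrow> ('n, 'k) laurent \<Rightarrow> ('n, 'k) laurent" where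
  "wder \<alpha> a = (\<lambda>f. xpow \<alpha> * diag (dot a) f)"

lemma is_der_wder: "is_der (wder \<alpha> a)"
  unfolding wder_def by (rule is_der_mult_left) (rule is_der_diag, rule dot_add_right)

lemma wder_xvar: "wder \<alpha> a (xvar k) = Poly_Mapping.single (\<alpha> + Poly_Mapping.single k 1) (a k)"
proof -
  have "wder \<alpha> a (xvar k) = lcst (a k) * (xpow \<alpha> * xpow (Poly_Mapping.single k 1))"
    by (simp add: wder_def xvar_eq_xpow diag_xpow dot_single_right mult.left_commute)
  then show ?thesis by (simp add: xpow_add single_eq_lcst_xpow)
qed

lemma wder_inj: "wder \<alpha> a = wder \<alpha> b \<Longrightarrow> a = b"
  by (rule ext) (metis wder_xvar lookup_single_eq)

lemma wder_add: "wder \<alpha> (\<lambda>k. a k + b k) = dadd (wder \<alpha> a) (wder \<alpha> b)"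
  by (rule ext) (simp add: wder_def dadd_def dot_left_linear diag_weight_add distrib_left)

lemma wder_scale: "wder \<alpha> (\<lambda>k. t * a k) = dsmult t (wder \<alpha> a)"
  by (rule ext) (simp only: wder_def dsmult_def lsmult_def dot_left_linear diag_weight_scale mult.left_commute)

lemma Hdiag_eq_wder: "Hdiag i = wder 0 (unit_vec i)"
  by (rule ext) (simp add: Hdiag_eq_diag wder_def)

lemma lie_br_wder:
  "lie_br (wder \<alpha> a) (wder \<beta> b) = wder (\<alpha> + \<beta>) (\<lambda>k. dot a \<beta> * b k - dot b \<alpha> * a k)"
proof
  fix f
  have la: "diag (dot a) (xpow \<beta> * g) = lcst (dot a \<beta>) * xpow \<beta> * g + xpow \<beta> * diag (dot a) g" for g
    by (simp add: diag_leibniz dot_add_right diag_xpow)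
  have lb: "diag (dot b) (xpow \<alpha> * g) = lcst (dot b \<alpha>) * xpow \<alpha> * g + xpow \<alpha> * diag (dot b) g" for g
    by (simp add: diag_leibniz dot_add_right diag_xpow)
  have "lie_br (wder \<alpha> a) (wder \<beta> b) f
     = xpow \<alpha> * (lcst (dot a \<beta>) * xpow \<beta> * diag (dot b) f + xpow \<beta> * diag (dot a) (diag (dot b) f))
     - xpow \<beta> * (lcst (dot b \<alpha>) * xpow \<alpha> * diag (dot a) f + xpow \<alpha> * diag (dot b) (diag (dot a) f))"
    by (simp only: lie_br_def wder_def la lb)
  also have "\<dots> = xpow (\<alpha> + \<beta>) * (lcst (dot a \<beta>) * diag (dot b) f - lcst (dot b \<alpha>) * diag (dot a) f)"
    by (simp add: diag_commute[of "dot a"] xpow_add[symmetric] algebra_simps)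
  also have "\<dots> = wder (\<alpha> + \<beta>) (\<lambda>k. dot a \<beta> * b k - dot b \<alpha> * a k) f"
    by (simp only: wder_def dot_left_linear diag_weight_diff diag_weight_scale)
  finally show "lie_br (wder \<alpha> a) (wder \<beta> b) f = wder (\<alpha> + \<beta>) (\<lambda>k. dot a \<beta> * b k - dot b \<alpha> * a k) f" .
qed

lemma lie_br_Hdiag_wder:
  "lie_br (Hdiag i) (wder \<alpha> a) = dsmult (of_int (Poly_Mapping.lookup \<alpha> i)) (wder \<alpha> a)"
  by (simp add: Hdiag_eq_wder lie_br_wder dot_unit_vec wder_scale[symmetric])

text \<open>Characteristic zero separates the weights: the eigenvalues of the \<open>H\<^sub>i\<close> on \<open>x\<^sup>e\<close> are the
  integers \<open>e\<^sub>i\<close>.\<close>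
lemma weight_vector_single:
  fixes f :: "('n::finite, 'k::field_char_0) laurent"
  assumes H: "\<And>i. Hdiag i f = lcst (of_int (Poly_Mapping.lookup \<gamma> i)) * f"
  shows "f = Poly_Mapping.single \<gamma> (Poly_Mapping.lookup f \<gamma>)"
proof (rule poly_mapping_eqI)
  fix e
  show "Poly_Mapping.lookup f e = Poly_Mapping.lookup (Poly_Mapping.single \<gamma> (Poly_Mapping.lookup f \<gamma>)) e"
  proof (cases "e = \<gamma>")
    case False
    then obtain i where i: "Poly_Mapping.lookup e i \<noteq> Poly_Mapping.lookup \<gamma> i"
      by (metis poly_mapping_eqI)
    have "of_int (Poly_Mapping.lookup e i) * Poly_Mapping.lookup f e
        = (of_int (Poly_Mapping.lookup \<gamma> i) :: 'k) * Poly_Mapping.lookup f e"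
      using arg_cong[OF H[of i], of "\<lambda>f. Poly_Mapping.lookup f e"]
      by (simp add: Hdiag_eq_diag dot_unit_vec)
    then show ?thesis using i False by (simp add: lookup_single)
  qed simp
qed

lemma weight_der_eq_wder:
  fixes D :: "('n::finite, 'k::field_char_0) laurent \<Rightarrow> ('n, 'k) laurent"
  assumes D: "is_der D"
    and H: "\<And>i. lie_br (Hdiag i) D = dsmult (of_int (Poly_Mapping.lookup \<alpha> i)) D"
  shows "D = wder \<alpha> (\<lambda>k. Poly_Mapping.lookup (D (xvar k)) (\<alpha> + Poly_Mapping.single k 1))"
proof (rule der_eqI[OF D is_der_wder])
  fix k
  have "Hdiag i (D (xvar k))
      = lcst (of_int (Poly_Mapping.lookup (\<alpha> + Poly_Mapping.single k 1) i)) * D (xvar k)" for i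
  proof -
    have "lie_br (Hdiag i) D (xvar k) = dsmult (of_int (Poly_Mapping.lookup \<alpha> i)) D (xvar k)"
      using H by simp
    then show ?thesis
      by (simp add: lie_br_def dsmult_def lsmult_def Hdiag_eq_diag xvar_eq_xpow diag_xpow
          der_lcst_mult[OF D] dot_unit_vec lookup_add lcst_add algebra_simps)
  qed
  then show "D (xvar k) = wder \<alpha> (\<lambda>k. Poly_Mapping.lookup (D (xvar k)) (\<alpha> + Poly_Mapping.single k 1)) (xvar k)"
    by (subst weight_vector_single) (simp_all add: wder_xvar)
qed

lemma der_eq_dsum_wder:
  assumes D: "is_der D"
  shows "D = dsum (SIGMA k:UNIV. Poly_Mapping.keys (D (xvar k)))
     (\<lambda>(k, \<beta>). wder (\<beta> - Poly_Mapping.single k 1) (\<lambda>j. if j = k then Poly_Mapping.lookup (D (xvar k)) \<beta> else 0))"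
    (is "D = dsum ?S ?F")
proof (rule der_eqI[OF D is_der_dsum])
  show "finite ?S" by simp
  show "is_der (?F i)" for i by (cases i) (simp add: is_der_wder)
  fix j
  have "dsum ?S ?F (xvar j) = (\<Sum>k\<in>UNIV. \<Sum>\<beta>\<in>Poly_Mapping.keys (D (xvar k)).
        wder (\<beta> - Poly_Mapping.single k 1) (\<lambda>j. if j = k then Poly_Mapping.lookup (D (xvar k)) \<beta> else 0) (xvar j))"
    unfolding dsum_def by (subst sum.Sigma) (auto simp: split_beta)
  also have "\<dots> = (\<Sum>k\<in>UNIV. if k = j then (\<Sum>\<beta>\<in>Poly_Mapping.keys (D (xvar k)).
        Poly_Mapping.single \<beta> (Poly_Mapping.lookup (D (xvar k)) \<beta>)) else 0)"
    by (rule sum.cong) (auto simp: wder_xvar intro!: sum.neutral)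
  also have "\<dots> = D (xvar j)" by (simp add: laurent_expansion[symmetric])
  finally show "D (xvar j) = dsum ?S ?F (xvar j)" by simp
qed

section \<open>Conjugation by the torus\<close>

definition tor_conj :: "('n \<Rightarrow> 'k::field) \<Rightarrow> (('n, 'k) laurent \<Rightarrow> ('n, 'k) laurent)
    \<Rightarrow> ('n, 'k) laurent \<Rightarrow> ('n, 'k) laurent" where
  "tor_conj l D = (\<lambda>f. tor l (D (tor (\<lambda>i. inverse (l i)) f)))"

lemma tor_add: "tor l (f + g) = tor l f + tor l g"
  by (simp add: tor_eq_diag diag_add)

lemma tor_diff: "tor l (f - g) = tor l f - tor l g"
  by (simp add: tor_eq_diag diag_diff)

lemma tor_lcst_mult: "tor l (lcst c * f) = lcst c * tor l f"
  by (simp add: tor_eq_diag diag_lcst_mult)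

lemma tor_sum: "tor l (sum F I) = (\<Sum>i\<in>I. tor l (F i))"
  by (induction I rule: infinite_finite_induct) (simp_all add: tor_eq_diag diag_add)

lemma tor_conj_dadd: "tor_conj l (dadd D E) = dadd (tor_conj l D) (tor_conj l E)"
  by (rule ext) (simp add: tor_conj_def dadd_def tor_add)

lemma tor_conj_dsmult: "tor_conj l (dsmult c D) = dsmult c (tor_conj l D)"
  by (rule ext) (simp add: tor_conj_def dsmult_def lsmult_def tor_lcst_mult)

lemma tor_conj_dsum: "tor_conj l (dsum I F) = dsum I (\<lambda>i. tor_conj l (F i))"
  by (rule ext) (simp add: tor_conj_def dsum_def tor_sum)

context
  fixes l :: "'n::finite \<Rightarrow> 'k::field"
  assumes l: "\<And>i. l i \<noteq> 0"
begin

lemma tor_mult: "tor l (f * g) = tor l f * tor l g"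
  by (simp add: tor_eq_diag diag_mult torus_char_add l)

lemma tor_inverse_mult:
  "tor (\<lambda>i. inverse (l i)) (f * g) = tor (\<lambda>i. inverse (l i)) f * tor (\<lambda>i. inverse (l i)) g"
  unfolding tor_eq_diag by (rule diag_mult) (rule torus_char_add, simp add: l)

lemma tor_tor_inverse: "tor l (tor (\<lambda>i. inverse (l i)) f) = f"
  by (rule poly_mapping_eqI)
    (simp add: tor_eq_diag mult.assoc[symmetric] torus_char_inverse[OF l] mult.commute[of "torus_char l _"])

lemma tor_inverse_tor: "tor (\<lambda>i. inverse (l i)) (tor l f) = f"
  by (rule poly_mapping_eqI) (simp add: tor_eq_diag mult.assoc[symmetric] torus_char_inverse[OF l])

lemma inv_tor: "inv (tor l) = tor (\<lambda>i. inverse (l i))"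
  by (rule inv_equality) (simp_all add: tor_tor_inverse tor_inverse_tor)

lemma is_der_tor_conj:
  assumes D: "is_der D"
  shows "is_der (tor_conj l D)"
proof (rule is_derI)
  show "tor_conj l D (f + g) = tor_conj l D f + tor_conj l D g" for f g
    by (simp add: tor_conj_def tor_add der_add[OF D])
  show "tor_conj l D (lcst c * f) = lcst c * tor_conj l D f" for c f
    by (simp add: tor_conj_def tor_lcst_mult der_lcst_mult[OF D])
  show "tor_conj l D (f * g) = tor_conj l D f * g + f * tor_conj l D g" for f g
    by (simp add: tor_conj_def tor_inverse_mult der_leibniz[OF D] tor_add tor_mult tor_tor_inverse)
qed

lemma tor_conj_lie_br: "tor_conj l (lie_br D E) = lie_br (tor_conj l D) (tor_conj l E)"
  by (rule ext) (simp add: tor_conj_def lie_br_def tor_diff tor_inverse_tor)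

lemma tor_conj_tor_conj_inverse: "tor_conj l (tor_conj (\<lambda>i. inverse (l i)) D) = D"
  by (rule ext) (simp add: tor_conj_def tor_tor_inverse tor_inverse_tor)

lemma tor_conj_inverse_tor_conj: "tor_conj (\<lambda>i. inverse (l i)) (tor_conj l D) = D"
  by (rule ext) (simp add: tor_conj_def tor_tor_inverse tor_inverse_tor)

lemma tor_conj_wder: "tor_conj l (wder \<alpha> a) = wder \<alpha> (\<lambda>k. torus_char l \<alpha> * a k)"
proof
  fix f
  have "tor_conj l (wder \<alpha> a) f
      = diag (torus_char l) (xpow \<alpha>)
        * diag (torus_char l) (diag (dot a) (diag (torus_char (\<lambda>i. inverse (l i))) f))"
    by (simp only: tor_conj_def wder_def tor_mult) (simp only: tor_eq_diag)
  also have "diag (torus_char l) (diag (dot a) (diag (torus_char (\<lambda>i. inverse (l i))) f)) = diag (dot a) f"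
  proof (unfold diag_diag, rule diag_cong)
    fix e
    have "torus_char l e * (dot a e * torus_char (\<lambda>i. inverse (l i)) e)
        = dot a e * (torus_char (\<lambda>i. inverse (l i)) e * torus_char l e)"
      by (simp only: ac_simps)
    then show "torus_char l e * (dot a e * torus_char (\<lambda>i. inverse (l i)) e) = dot a e"
      by (simp only: torus_char_inverse[OF l] mult_1_right)
  qed
  finally show "tor_conj l (wder \<alpha> a) f = wder \<alpha> (\<lambda>k. torus_char l \<alpha> * a k) f"
    by (simp only: wder_def dot_left_linear diag_weight_scale diag_xpow) (simp add: ac_simps)
qed

lemma tor_conj_Hdiag: "tor_conj l (Hdiag i) = Hdiag i"
  by (simp add: Hdiag_eq_wder tor_conj_wder torus_char_def)

end

lemma restrict_tor_conj_in_lie_aut: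
  fixes l :: "'n::finite \<Rightarrow> 'k::field"
  assumes l: "\<And>i. l i \<noteq> 0"
  shows "restrict (tor_conj l) Wn \<in> lie_aut"
proof -
  have l': "\<And>i. inverse (l i) \<noteq> 0" using l by simp
  have "bij_betw (restrict (tor_conj l) Wn) Wn Wn"
    by (rule bij_betw_byWitness[where f'="restrict (tor_conj (\<lambda>i. inverse (l i))) Wn"])
      (auto simp: Wn_def is_der_tor_conj[OF l] is_der_tor_conj[OF l']
        tor_conj_tor_conj_inverse[OF l] tor_conj_inverse_tor_conj[OF l])
  then show ?thesis
    by (auto simp: lie_aut_def Wn_def is_der_dadd is_der_dsmult is_der_lie_br
        tor_conj_dadd tor_conj_dsmult tor_conj_lie_br[OF l])
qed

lemma tor_conj_eq_comp:
  fixes l :: "'n::finite \<Rightarrow> 'k::field"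
  assumes "\<And>i. l i \<noteq> 0"
  shows "tor_conj l = (\<lambda>\<delta>. tor l \<circ> \<delta> \<circ> inv (tor l))"
  by (intro ext) (simp add: tor_conj_def inv_tor[OF assms])

lemma torus_W_eq: "torus_W = {restrict (tor_conj l) Wn | l :: 'n::finite \<Rightarrow> 'k::field. \<forall>i. l i \<noteq> 0}"
  unfolding torus_W_def by (intro Collect_cong ex_cong1) (auto simp: tor_conj_eq_comp)

section \<open>Lie automorphisms fixing the \<open>H\<^sub>i\<close>\<close>

lemma wder_in_Wn: "wder \<alpha> a \<in> Wn"
  by (simp add: Wn_def is_der_wder)

lemma Hdiag_in_Wn: "Hdiag i \<in> (Wn :: (('n::finite, 'k::comm_ring_1) laurent \<Rightarrow> _) set)"
  by (simp add: Wn_def is_der_Hdiag)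

lemma lie_aut_bij: "\<phi> \<in> lie_aut \<Longrightarrow> bij_betw \<phi> Wn Wn"
  by (simp add: lie_aut_def)

lemma lie_aut_dadd: "\<phi> \<in> lie_aut \<Longrightarrow> D \<in> Wn \<Longrightarrow> E \<in> Wn \<Longrightarrow> \<phi> (dadd D E) = dadd (\<phi> D) (\<phi> E)"
  by (simp add: lie_aut_def)

lemma lie_aut_dsmult: "\<phi> \<in> lie_aut \<Longrightarrow> D \<in> Wn \<Longrightarrow> \<phi> (dsmult c D) = dsmult c (\<phi> D)"
  by (simp add: lie_aut_def)

lemma lie_aut_lie_br: "\<phi> \<in> lie_aut \<Longrightarrow> D \<in> Wn \<Longrightarrow> E \<in> Wn \<Longrightarrow> \<phi> (lie_br D E) = lie_br (\<phi> D) (\<phi> E)"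
  by (simp add: lie_aut_def)

lemma lie_aut_extensional: "\<phi> \<in> lie_aut \<Longrightarrow> \<phi> \<in> extensional Wn"
  by (simp add: lie_aut_def)

lemma lie_aut_zero:
  fixes \<phi> :: "(('n, 'k::field) laurent \<Rightarrow> ('n, 'k) laurent) \<Rightarrow> (('n, 'k) laurent \<Rightarrow> ('n, 'k) laurent)"
  assumes "\<phi> \<in> lie_aut"
  shows "\<phi> (\<lambda>f. 0) = (\<lambda>f. 0)"
proof -
  have zero: "(\<lambda>f. 0) = dsmult 0 D" for D :: "('n, 'k::field) laurent \<Rightarrow> _"
    by (simp add: dsmult_def lsmult_def lcst_def fun_eq_iff)
  have "(\<lambda>f. 0) \<in> (Wn :: (('n, 'k) laurent \<Rightarrow> _) set)" by (simp add: Wn_def is_der_zero)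
  then show ?thesis using lie_aut_dsmult[OF assms] zero by metis
qed

lemma lie_aut_dsum:
  assumes "\<phi> \<in> lie_aut" and "finite I" and "\<And>i. i \<in> I \<Longrightarrow> F i \<in> Wn"
  shows "\<phi> (dsum I F) = dsum I (\<lambda>i. \<phi> (F i))"
  using assms(2,3)
proof (induction I rule: finite_induct)
  case empty
  then show ?case using lie_aut_zero[OF assms(1)] by (simp add: dsum_empty)
next
  case (insert i I)
  then have "dsum I F \<in> Wn" by (simp add: Wn_def is_der_dsum)
  then show ?case using insert by (simp add: dsum_insert lie_aut_dadd[OF assms(1)])
qed

context
  fixes \<phi> :: "(('n::finite, 'k::field_char_0) laurent \<Rightarrow> ('n, 'k) laurent) \<Rightarrow> (('n, 'k) laurent \<Rightarrow> ('n, 'k) laurent)"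
  assumes aut: "\<phi> \<in> lie_aut" and fixes_H: "\<And>i. \<phi> (Hdiag i) = Hdiag i"
begin

lemma lie_br_Hdiag_aut:
  assumes "D \<in> Wn"
  shows "lie_br (Hdiag i) (\<phi> D) = \<phi> (lie_br (Hdiag i) D)"
  using lie_aut_lie_br[OF aut Hdiag_in_Wn assms] by (simp add: fixes_H)

definition weight_map :: "('n \<Rightarrow>\<^sub>0 int) \<Rightarrow> ('n \<Rightarrow> 'k) \<Rightarrow> 'n \<Rightarrow> 'k" where
  "weight_map \<alpha> a = (\<lambda>k. Poly_Mapping.lookup (\<phi> (wder \<alpha> a) (xvar k)) (\<alpha> + Poly_Mapping.single k 1))"

lemma aut_wder: "\<phi> (wder \<alpha> a) = wder \<alpha> (weight_map \<alpha> a)"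
  unfolding weight_map_def
proof (rule weight_der_eq_wder)
  show "is_der (\<phi> (wder \<alpha> a))"
    using bij_betwE[OF lie_aut_bij[OF aut]] wder_in_Wn by (auto simp: Wn_def)
  show "lie_br (Hdiag i) (\<phi> (wder \<alpha> a)) = dsmult (of_int (Poly_Mapping.lookup \<alpha> i)) (\<phi> (wder \<alpha> a))" for i
    by (simp add: lie_br_Hdiag_aut wder_in_Wn lie_br_Hdiag_wder lie_aut_dsmult[OF aut])
qed

lemma weight_map_surj: "\<exists>a. weight_map \<alpha> a = b"
proof -
  have "wder \<alpha> b \<in> \<phi> ` Wn"
    using bij_betw_imp_surj_on[OF lie_aut_bij[OF aut]] wder_in_Wn by simp
  then obtain D where D: "D \<in> Wn" "\<phi> D = wder \<alpha> b" by auto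
  have "lie_br (Hdiag i) D = dsmult (of_int (Poly_Mapping.lookup \<alpha> i)) D" for i
  proof (rule inj_onD[OF bij_betw_imp_inj_on[OF lie_aut_bij[OF aut]]])
    show "\<phi> (lie_br (Hdiag i) D) = \<phi> (dsmult (of_int (Poly_Mapping.lookup \<alpha> i)) D)"
      using D by (simp add: lie_br_Hdiag_aut[symmetric] lie_br_Hdiag_wder lie_aut_dsmult[OF aut])
    show "lie_br (Hdiag i) D \<in> Wn" "dsmult (of_int (Poly_Mapping.lookup \<alpha> i)) D \<in> Wn"
      using D(1) by (simp_all add: Wn_def is_der_lie_br is_der_Hdiag is_der_dsmult)
  qed
  then have "D = wder \<alpha> (\<lambda>k. Poly_Mapping.lookup (D (xvar k)) (\<alpha> + Poly_Mapping.single k 1))"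
    using D(1) by (intro weight_der_eq_wder) (simp_all add: Wn_def)
  then have "wder \<alpha> (weight_map \<alpha> (\<lambda>k. Poly_Mapping.lookup (D (xvar k)) (\<alpha> + Poly_Mapping.single k 1)))
      = wder \<alpha> b"
    using D(2) by (simp add: aut_wder[symmetric])
  then show ?thesis by (blast dest: wder_inj)
qed

lemma weight_map_add: "weight_map g (\<lambda>k. a k + b k) = (\<lambda>k. weight_map g a k + weight_map g b k)"
  by (rule wder_inj[of g]) (simp add: wder_add aut_wder[symmetric] lie_aut_dadd[OF aut] wder_in_Wn)

lemma weight_map_scale: "weight_map g (\<lambda>k. t * a k) = (\<lambda>k. t * weight_map g a k)"
  by (rule wder_inj[of g]) (simp add: wder_scale aut_wder[symmetric] lie_aut_dsmult[OF aut] wder_in_Wn)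

lemma weight_map_bracket:
  "weight_map (g + h) (\<lambda>k. dot a h * b k - dot b g * a k)
    = (\<lambda>k. dot (weight_map g a) h * weight_map h b k - dot (weight_map h b) g * weight_map g a k)"
  by (rule wder_inj[of "g + h"])
    (simp add: lie_br_wder[symmetric] aut_wder[symmetric] lie_aut_lie_br[OF aut] wder_in_Wn)

text \<open>The weight-zero derivations are the linear combinations of the \<open>H\<^sub>i\<close>, all fixed by \<open>\<phi>\<close>.\<close>
lemma weight_map_zero: "weight_map 0 a = a"
proof -
  have unit: "weight_map 0 (unit_vec j) = unit_vec j" for j
    by (rule wder_inj[of 0]) (simp add: aut_wder[symmetric] Hdiag_eq_wder[symmetric] fixes_H)
  have sums: "weight_map 0 (\<lambda>k. \<Sum>j\<in>J. a j * unit_vec j k) = (\<lambda>k. \<Sum>j\<in>J. a j * unit_vec j k)"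
    if "finite J" for J
    using that
  proof (induction J rule: finite_induct)
    case empty
    then show ?case using weight_map_scale[of 0 0] by simp
  next
    case (insert j J)
    then show ?case by (simp add: weight_map_add weight_map_scale unit)
  qed
  have "(\<lambda>k. \<Sum>j\<in>UNIV. a j * unit_vec j k) = a"
  proof
    fix k
    have "(\<Sum>j\<in>UNIV. a j * unit_vec j k) = (\<Sum>j\<in>UNIV. if j = k then a k else 0)"
      by (rule sum.cong) (auto simp: unit_vec_def)
    then show "(\<Sum>j\<in>UNIV. a j * unit_vec j k) = a k" by simp
  qed
  then show ?thesis using sums[OF finite_UNIV] by simp
qed

lemma bracket_family_weight_map: "bracket_family weight_map"
  by unfold_locales (simp_all only: weight_map_add weight_map_scale weight_map_surj weight_map_zero
      weight_map_bracket)

lemma aut_eq_restrict_tor_conj: "\<exists>l. (\<forall>i. l i \<noteq> 0) \<and> \<phi> = restrict (tor_conj l) Wn"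
proof -
  interpret bracket_family weight_map by (rule bracket_family_weight_map)
  obtain l where l: "\<forall>i. l i \<noteq> 0" and torus_form: "\<And>g a. weight_map g a = (\<lambda>k. torus_char l g * a k)"
    using exists_torus_form by blast
  have on_wder: "\<phi> (wder \<alpha> a) = tor_conj l (wder \<alpha> a)" for \<alpha> a
    using l by (simp add: aut_wder torus_form tor_conj_wder)
  have "\<phi> D = restrict (tor_conj l) Wn D" for D
  proof (cases "D \<in> Wn")
    case True
    define S where "S = (SIGMA k:UNIV. Poly_Mapping.keys (D (xvar k)))"
    define F where "F = (\<lambda>(k, \<beta>). wder (\<beta> - Poly_Mapping.single k 1)
        (\<lambda>j. if j = k then Poly_Mapping.lookup (D (xvar k)) \<beta> else 0))"
    have D: "D = dsum S F"
      unfolding S_def F_def using True by (intro der_eq_dsum_wder) (simp add: Wn_def)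
    have "\<phi> (dsum S F) = dsum S (\<lambda>i. tor_conj l (F i))"
      by (simp add: lie_aut_dsum[OF aut] S_def F_def wder_in_Wn split_beta on_wder)
    then show ?thesis using True D by (simp add: tor_conj_dsum)
  next
    case False
    then show ?thesis by (simp add: extensional_arb[OF lie_aut_extensional[OF aut] False])
  qed
  then have "\<phi> = restrict (tor_conj l) Wn" by (rule ext)
  then show ?thesis using l by (intro exI[of _ l]) simp
qed

end

theorem lemma2p12:
  "{\<phi> \<in> (lie_aut :: ((('n::finite, 'k::field_char_0) laurent \<Rightarrow> ('n, 'k) laurent) \<Rightarrow>
        (('n, 'k) laurent \<Rightarrow> ('n, 'k) laurent)) set). \<forall>i. \<phi> (Hdiag i) = Hdiag i}
   = torus_W"
proof (intro equalityI subsetI)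
  fix \<phi> :: "(('n, 'k) laurent \<Rightarrow> ('n, 'k) laurent) \<Rightarrow> (('n, 'k) laurent \<Rightarrow> ('n, 'k) laurent)"
  assume "\<phi> \<in> {\<phi> \<in> lie_aut. \<forall>i. \<phi> (Hdiag i) = Hdiag i}"
  then have "\<phi> \<in> lie_aut" and "\<And>i. \<phi> (Hdiag i) = Hdiag i" by auto
  then obtain l where "\<forall>i. l i \<noteq> 0" and "\<phi> = restrict (tor_conj l) Wn"
    using aut_eq_restrict_tor_conj by meson
  then show "\<phi> \<in> torus_W" by (auto simp: torus_W_eq)
next
  fix \<phi> :: "(('n, 'k) laurent \<Rightarrow> ('n, 'k) laurent) \<Rightarrow> (('n, 'k) laurent \<Rightarrow> ('n, 'k) laurent)"
  assume "\<phi> \<in> torus_W"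
  then obtain l where l: "\<forall>i. l i \<noteq> 0" and \<phi>: "\<phi> = restrict (tor_conj l) Wn"
    unfolding torus_W_eq by auto
  have "\<phi> (Hdiag i) = Hdiag i" for i
    using l by (simp add: \<phi> tor_conj_Hdiag Hdiag_in_Wn)
  moreover have "\<phi> \<in> lie_aut"
    using l by (simp add: \<phi> restrict_tor_conj_in_lie_aut)
  ultimately show "\<phi> \<in> {\<phi> \<in> lie_aut. \<forall>i. \<phi> (Hdiag i) = Hdiag i}" by simp
qed

end
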